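(* For every graph $G$ and every positive integer $k$, $\gamma_k(G)\le \chi_{\mu_k}(G)$.
   Context: All graphs are finite, simple and undirected. $d_G(u,v)$ denotes the distance in $G$; a $u,v$-geodesic is a shortest $u,v$-path. For a positive integer $k$, a set $M\subseteq V(G)$ is a $k$-distance mutual-visibility set if for every two vertices $u,v\in M$ there exists a $u,v$-geodesic of length at most $k$ none of whose internal vertices lies in $M$. The $k$-distance mutual-visibility chromatic number $\chi_{\mu_k}(G)$ is the minimum cardinality of a partition of $V(G)$ into $k$-distance mutual-visibility sets. A set $D\subseteq V(G)$ is a distance $k$-dominating set if every vertex of $V(G)\setminus D$ is at distance at most $k$ from some vertex of $D$; $\gamma_k(G)$ is the minimum cardinality of such a set. *)

theory Defs
  imports Main "HOL-Library.Extended_Nat" "HOL-Library.Disjoint_Sets"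
begin

definition simple_graph :: "'a set \<Rightarrow> ('a \<Rightarrow> 'a \<Rightarrow> bool) \<Rightarrow> bool" where
  "simple_graph V E \<longleftrightarrow> finite V \<and> (\<forall>u v. E u v \<longrightarrow> u \<in> V \<and> v \<in> V)
     \<and> (\<forall>u v. E u v \<longrightarrow> E v u) \<and> (\<forall>v. \<not> E v v)"

definition walk :: "'a set \<Rightarrow> ('a \<Rightarrow> 'a \<Rightarrow> bool) \<Rightarrow> 'a list \<Rightarrow> bool" where
  "walk V E p \<longleftrightarrow> p \<noteq> [] \<and> set p \<subseteq> V \<and> (\<forall>i. Suc i < length p \<longrightarrow> E (p ! i) (p ! Suc i))"

definition walk_betw :: "'a set \<Rightarrow> ('a \<Rightarrow> 'a \<Rightarrow> bool) \<Rightarrow> 'a \<Rightarrow> 'a list \<Rightarrow> 'a \<Rightarrow> bool" where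
  "walk_betw V E u p v \<longleftrightarrow> walk V E p \<and> hd p = u \<and> last p = v"

text \<open>Distance d_G(u,v) (infinite if no walk exists).\<close>
definition gdist :: "'a set \<Rightarrow> ('a \<Rightarrow> 'a \<Rightarrow> bool) \<Rightarrow> 'a \<Rightarrow> 'a \<Rightarrow> enat" where
  "gdist V E u v = (INF p \<in> {p. walk_betw V E u p v}. enat (length p - 1))"

text \<open>A u,v-geodesic: a u,v-walk of length d_G(u,v) (necessarily a path).\<close>
definition geodesic :: "'a set \<Rightarrow> ('a \<Rightarrow> 'a \<Rightarrow> bool) \<Rightarrow> 'a \<Rightarrow> 'a list \<Rightarrow> 'a \<Rightarrow> bool" where
  "geodesic V E u p v \<longleftrightarrow> walk_betw V E u p v \<and> enat (length p - 1) = gdist V E u v"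

definition internal :: "'a list \<Rightarrow> 'a set" where
  "internal p = set (butlast (tl p))"

definition k_dist_mv_set :: "'a set \<Rightarrow> ('a \<Rightarrow> 'a \<Rightarrow> bool) \<Rightarrow> nat \<Rightarrow> 'a set \<Rightarrow> bool" where
  "k_dist_mv_set V E k M \<longleftrightarrow> M \<subseteq> V \<and>
     (\<forall>u\<in>M. \<forall>v\<in>M. u \<noteq> v \<longrightarrow>
        (\<exists>p. geodesic V E u p v \<and> length p - 1 \<le> k \<and> internal p \<inter> M = {}))"

definition chi_mu :: "'a set \<Rightarrow> ('a \<Rightarrow> 'a \<Rightarrow> bool) \<Rightarrow> nat \<Rightarrow> nat" where
  "chi_mu V E k = Inf {card P | P. partition_on V P \<and> (\<forall>M\<in>P. k_dist_mv_set V E k M)}"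

definition dist_k_dominating :: "'a set \<Rightarrow> ('a \<Rightarrow> 'a \<Rightarrow> bool) \<Rightarrow> nat \<Rightarrow> 'a set \<Rightarrow> bool" where
  "dist_k_dominating V E k D \<longleftrightarrow> D \<subseteq> V \<and>
     (\<forall>v \<in> V - D. \<exists>u\<in>D. gdist V E v u \<le> enat k)"

definition gamma_k :: "'a set \<Rightarrow> ('a \<Rightarrow> 'a \<Rightarrow> bool) \<Rightarrow> nat \<Rightarrow> nat" where
  "gamma_k V E k = Inf {card D | D. dist_k_dominating V E k D}"

end

theory Submission
  imports Defs
begin

text \<open>Take a partition of V into \<open>\<chi>\<^sub>\<mu>\<^sub>k\<close> k-distance mutual-visibility sets and pick
  one vertex from each block. Any other vertex v sees the chosen vertex of its block
  along a geodesic of length at most k, so the chosen vertices form a distance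
  k-dominating set.\<close>

lemma singletons_k_dist_mv_partition:
  "partition_on V ((\<lambda>v. {v}) ` V) \<and> (\<forall>M\<in>(\<lambda>v. {v}) ` V. k_dist_mv_set V E k M)"
  by (simp add: partition_on_singletons k_dist_mv_set_def)

lemma chi_mu_attained:
  obtains P where "partition_on V P" "\<forall>M\<in>P. k_dist_mv_set V E k M" "card P = chi_mu V E k"
proof -
  let ?S = "{card P | P. partition_on V P \<and> (\<forall>M\<in>P. k_dist_mv_set V E k M)}"
  have "?S \<noteq> {}"
    using singletons_k_dist_mv_partition by blast
  then have "chi_mu V E k \<in> ?S"
    unfolding chi_mu_def by (rule Inf_nat_def1)
  then show ?thesis
    using that by auto
qed

lemma partition_on_obtain_transversal:
  assumes "partition_on V P"
  obtains D where "D \<subseteq> V" "\<forall>M\<in>P. M \<inter> D \<noteq> {}" "card D = card P"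
proof -
  define pick where "pick M = (SOME x. x \<in> M)" for M :: "'a set"
  have pick_in: "pick M \<in> M" if "M \<in> P" for M
  proof -
    have "M \<noteq> {}"
      using partition_onD3[OF assms] that by blast
    then show ?thesis
      unfolding pick_def by (simp add: some_in_eq)
  qed
  have "inj_on pick P"
  proof (rule inj_onI)
    fix M N assume M: "M \<in> P" and N: "N \<in> P" and same_pick: "pick M = pick N"
    show "M = N"
    proof (rule ccontr)
      assume "M \<noteq> N"
      then have "M \<inter> N = {}"
        by (rule disjointD[OF partition_onD2[OF assms] M N])
      with pick_in[OF M] pick_in[OF N] same_pick show False
        by auto
    qed
  qed
  moreover have "pick ` P \<subseteq> V"
    using pick_in assms by (auto simp: partition_on_def)
  moreover have "\<forall>M\<in>P. M \<inter> pick ` P \<noteq> {}"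
    using pick_in by blast
  ultimately show ?thesis
    using that card_image by blast
qed

lemma dist_k_dominating_if_meets_k_dist_mv_blocks:
  assumes "partition_on V P" "\<forall>M\<in>P. k_dist_mv_set V E k M"
    and "D \<subseteq> V" "\<forall>M\<in>P. M \<inter> D \<noteq> {}"
  shows "dist_k_dominating V E k D"
  unfolding dist_k_dominating_def
proof (intro conjI ballI)
  fix v assume v: "v \<in> V - D"
  then obtain M where M: "M \<in> P" "v \<in> M"
    using assms(1) by (auto simp: partition_on_def)
  then obtain u where u: "u \<in> M" "u \<in> D"
    using assms(4) by blast
  have "v \<noteq> u"
    using v u(2) by auto
  moreover have "k_dist_mv_set V E k M"
    using assms(2) M(1) by (rule bspec)
  ultimately obtain p where "geodesic V E v p u" "length p - 1 \<le> k"
    using M(2) u(1) unfolding k_dist_mv_set_def by blast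
  then have "gdist V E v u \<le> enat k"
    unfolding geodesic_def by (metis enat_ord_simps(1))
  with u show "\<exists>u\<in>D. gdist V E v u \<le> enat k" by blast
qed (fact assms(3))

lemma gamma_k_le_card:
  assumes "dist_k_dominating V E k D"
  shows "gamma_k V E k \<le> card D"
  unfolding gamma_k_def using assms by (intro cInf_lower) auto

theorem proposition2p3:
  fixes V :: "'a set" and E :: "'a \<Rightarrow> 'a \<Rightarrow> bool" and k :: nat
  assumes "simple_graph V E" and "k \<ge> 1"
  shows "gamma_k V E k \<le> chi_mu V E k"
proof -
  obtain P where P: "partition_on V P" "\<forall>M\<in>P. k_dist_mv_set V E k M"
    and card_P: "card P = chi_mu V E k"
    by (rule chi_mu_attained)
  obtain D where D: "D \<subseteq> V" "\<forall>M\<in>P. M \<inter> D \<noteq> {}" and "card D = card P"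
    using partition_on_obtain_transversal[OF P(1)] by blast
  have "dist_k_dominating V E k D"
    using dist_k_dominating_if_meets_k_dist_mv_blocks[OF P D] .
  then have "gamma_k V E k \<le> card D"
    by (rule gamma_k_le_card)
  with \<open>card D = card P\<close> card_P show ?thesis by simp
qed

end
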